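(* Let $Q$ be a non-negative matrix on a countable set $S$ with finite Green's function and let $\nu$ be a $Q$-excessive measure with one-sided Kuznetsov measure $\mathcal K^\nu$. For every measurable set $A\subset\mathcal W$, $n\in\mathbb N$, $B\subset S^{n+1}$ and $x\in S$, $$\mathcal K^\nu\big((X_{m-n})_{m\in-\mathbb N_0}\in A,\ X_{-n}=x,\ (X_{-n},\dots,X_0)\in B\big)=\mathcal K^\nu(A\cap\{X_0=x\})\,\mathcal Q^x_n(B).$$
   Context: $Q=(q_{x,y})_{x,y\in S}$ non-negative with $G=\sum_{n\ge0}Q^n$ finite entrywise. A measure $\nu$ on $S$ finite at every point is $Q$-excessive if $\sum_y\nu(y)q_{y,x}\le\nu(x)$ for all $x$; $\nu^{\mathrm{pot}}(x)=\nu(x)-\sum_y\nu(y)q_{y,x}$. $\mathcal W$ is the set of sequences $(x_n)_{n\in-\mathbb N_0}\in(S\cup\{\partial\})^{-\mathbb N_0}$ ($\partial\notin S$) for which some $\alpha\in-\mathbb N_0\cup\{-\infty\}$ satisfies $x_n\in S\iff\alpha\le n$; $X_n$ are the coordinates; product σ-field. The one-sided Kuznetsov measure $\mathcal K^\nu$ is the measure on $\mathcal W$ with $\mathcal K^\nu(\{(\dots,\partial,x_{-k},\dots,x_0)\})=\nu^{\mathrm{pot}}(x_{-k})q_{x_{-k},x_{-k+1}}\cdots q_{x_{-1},x_0}$ and $\mathcal K^\nu(X_{-k}=x_{-k},\dots,X_0=x_0)=\nu(x_{-k})q_{x_{-k},x_{-k+1}}\cdots q_{x_{-1},x_0}$ for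 all $k\in\mathbb N$, $x_{-k},\dots,x_0\in S$. For $x\in S$ and $n\in\mathbb N_0$, $\mathcal Q^x_n$ is the measure on $S^{n+1}$ with $\mathcal Q^x_n(\{(x_0,\dots,x_n)\})=\mathbf 1_{\{x=x_0\}}q_{x_0,x_1}\cdots q_{x_{n-1},x_n}$. *)

theory Defs
  imports "HOL-Probability.Probability"
begin

text \<open>Paths indexed by -N_0: a path is a function nat => 'a option, where
  the value at k stands for X_{-k}, and None stands for the cemetery point.\<close>

definition W :: "(nat \<Rightarrow> 'a option) set" where
  "W = {\<omega>. (\<forall>k. \<omega> k \<noteq> None) \<or> (\<exists>N. \<forall>k. \<omega> k \<noteq> None \<longleftrightarrow> k \<le> N)}"

definition Wspace :: "(nat \<Rightarrow> 'a option) measure" where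
  "Wspace = restrict_space (Pi\<^sub>M UNIV (\<lambda>_. count_space UNIV)) W"

primrec qpow :: "('a \<Rightarrow> 'a \<Rightarrow> real) \<Rightarrow> nat \<Rightarrow> 'a \<Rightarrow> 'a \<Rightarrow> ennreal" where
  "qpow q 0 x y = (if x = y then 1 else 0)"
| "qpow q (Suc n) x y = (\<integral>\<^sup>+ z. qpow q n x z * ennreal (q z y) \<partial>count_space UNIV)"

definition green_finite :: "('a \<Rightarrow> 'a \<Rightarrow> real) \<Rightarrow> bool" where
  "green_finite q \<longleftrightarrow> (\<forall>x y. (\<Sum>n. qpow q n x y) \<noteq> \<infinity>)"

definition excessive :: "('a \<Rightarrow> 'a \<Rightarrow> real) \<Rightarrow> ('a \<Rightarrow> real) \<Rightarrow> bool" where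
  "excessive q \<nu> \<longleftrightarrow> (\<forall>x. 0 \<le> \<nu> x) \<and>
     (\<forall>x. (\<integral>\<^sup>+ y. ennreal (\<nu> y * q y x) \<partial>count_space UNIV) \<le> ennreal (\<nu> x))"

definition potpart :: "('a \<Rightarrow> 'a \<Rightarrow> real) \<Rightarrow> ('a \<Rightarrow> real) \<Rightarrow> 'a \<Rightarrow> ennreal" where
  "potpart q \<nu> x = ennreal (\<nu> x) - (\<integral>\<^sup>+ y. ennreal (\<nu> y * q y x) \<partial>count_space UNIV)"

definition pathweight :: "('a \<Rightarrow> 'a \<Rightarrow> real) \<Rightarrow> 'a list \<Rightarrow> ennreal" where
  "pathweight q xs = (\<Prod>i<length xs - 1. ennreal (q (xs ! i) (xs ! Suc i)))"

text \<open>One-sided Kuznetsov measure. A list xs = [x_{-k},...,x_0] (k = length xs - 1);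
  X_{-j} corresponds to rev xs ! j.\<close>
definition kuznetsov :: "('a \<Rightarrow> 'a \<Rightarrow> real) \<Rightarrow> ('a \<Rightarrow> real) \<Rightarrow> (nat \<Rightarrow> 'a option) measure \<Rightarrow> bool" where
  "kuznetsov q \<nu> K \<longleftrightarrow> sets K = sets Wspace \<and>
     (\<forall>xs. xs \<noteq> [] \<longrightarrow>
        emeasure K {\<omega> \<in> W. \<forall>j. \<omega> j = (if j < length xs then Some (rev xs ! j) else None)}
          = potpart q \<nu> (hd xs) * pathweight q xs) \<and>
     (\<forall>xs. xs \<noteq> [] \<longrightarrow>
        emeasure K {\<omega> \<in> W. \<forall>j < length xs. \<omega> j = Some (rev xs ! j)}
          = ennreal (\<nu> (hd xs)) * pathweight q xs)"

definition Qn :: "('a \<Rightarrow> 'a \<Rightarrow> real) \<Rightarrow> 'a \<Rightarrow> nat \<Rightarrow> 'a list set \<Rightarrow> ennreal" where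
  "Qn q x n B = (\<integral>\<^sup>+ xs. (if hd xs = x then pathweight q xs else 0)
                    \<partial>count_space {xs \<in> B. length xs = Suc n})"

end

(* Under K^nu, the cylinder fixing the states x_{-k}, ..., x_0 followed by a prescribed tail
   (further states, possibly the cemetery) has measure equal to that of the cylinder fixing x_{-k}
   followed by the same tail, times q_{x_{-k},x_{-k+1}} ... q_{x_{-1},x_0}: this is read off the two
   defining formulas of K^nu.  Hence, for a fixed path b = (x_{-n}, ..., x_0), the measures
   A |-> K^nu((X_{m-n})_m in A, (X_{-n}, ..., X_0) = b) and A |-> K^nu(A, X_0 = x_{-n}) * q-weight of b
   agree on all cylinders.  Cylinders form a pi-system generating the sigma-algebra of W, and both
   measures are finite on the countable cover {X_0 = y}, so they coincide.  Summing over b in B with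
   x_{-n} = x gives the theorem. *)

theory Submission
  imports Defs
begin

(* shift n \<omega> is the path (X_{m-n})_{m <= 0} of the statement. *)
abbreviation (input) shift :: "nat \<Rightarrow> (nat \<Rightarrow> 'b) \<Rightarrow> nat \<Rightarrow> 'b" where
  "shift n \<omega> \<equiv> \<lambda>m. \<omega> (m + n)"

lemma W_None_upward:
  assumes "\<omega> \<in> W" "\<omega> i = None" "i \<le> j"
  shows "\<omega> j = None"
  using assms unfolding W_def by simp (metis le_trans not_None_eq)

lemma W_Some_0: "\<omega> \<in> W \<Longrightarrow> \<omega> 0 \<noteq> None"
  unfolding W_def by auto

lemma shift_in_W:
  assumes "\<omega> \<in> W" "\<omega> n \<noteq> None"
  shows "shift n \<omega> \<in> W"
  using assms unfolding W_def
proof (elim CollectE disjE exE)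
  fix N assume N: "\<forall>k. \<omega> k \<noteq> None \<longleftrightarrow> k \<le> N"
  with assms(2) have "\<forall>k. \<omega> (k + n) \<noteq> None \<longleftrightarrow> k \<le> N - n" by auto
  then show "shift n \<omega> \<in> {\<omega>. (\<forall>k. \<omega> k \<noteq> None) \<or> (\<exists>N. \<forall>k. \<omega> k \<noteq> None \<longleftrightarrow> k \<le> N)}"
    by blast
qed auto

lemma pathweight_singleton: "pathweight q [a] = 1"
  by (simp add: pathweight_def)

lemma pathweight_Cons_Cons: "pathweight q (a # c # r) = ennreal (q a c) * pathweight q (c # r)"
  unfolding pathweight_def by (simp add: prod.lessThan_Suc_shift del: prod.lessThan_Suc)

lemma pathweight_finite: "pathweight q xs \<noteq> \<top>"
  unfolding pathweight_def by (simp add: ennreal_prod_eq_top)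

section \<open>Cylinder sets\<close>

(* cyl ys fixes X_{-j} = ys ! j for j < length ys (None being the cemetery); a path
   (x_{-n}, ..., x_0), given as a list b, corresponds to cyl (map Some (rev b)). *)
definition cyl :: "'a option list \<Rightarrow> (nat \<Rightarrow> 'a option) set" where
  "cyl ys = {\<omega> \<in> W. \<forall>j<length ys. \<omega> j = ys ! j}"

lemma range_cyl_subset_Pow_W: "range cyl \<subseteq> Pow W"
  by (auto simp: cyl_def)

lemma cyl_None: "cyl [None] = {}"
  by (auto simp: cyl_def dest: W_Some_0)

lemma cyl_Int_cyl_singleton:
  "cyl zs \<inter> cyl [y] = (if zs = [] \<or> hd zs = y then cyl (y # tl zs) else {})"
  by (cases zs) (auto simp: cyl_def nth_Cons split: nat.splits)

lemma cyl_append: "cyl (ys @ t) = cyl ys \<inter> {\<omega>. \<forall>i<length t. \<omega> (length ys + i) = t ! i}"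
proof (intro equalityI subsetI)
  fix \<omega> assume "\<omega> \<in> cyl (ys @ t)"
  then have "\<omega> \<in> W" "\<And>j. j < length ys + length t \<Longrightarrow> \<omega> j = (ys @ t) ! j"
    by (auto simp: cyl_def)
  then show "\<omega> \<in> cyl ys \<inter> {\<omega>. \<forall>i<length t. \<omega> (length ys + i) = t ! i}"
    by (auto simp: cyl_def nth_append)
next
  fix \<omega> assume \<omega>: "\<omega> \<in> cyl ys \<inter> {\<omega>. \<forall>i<length t. \<omega> (length ys + i) = t ! i}"
  have "\<omega> j = (ys @ t) ! j" if "j < length ys + length t" for j
  proof (cases "j < length ys")
    case False
    with \<omega> that show ?thesis
      by (auto simp: nth_append dest!: spec[of _ "j - length ys"])
  qed (use \<omega> in \<open>auto simp: cyl_def nth_append\<close>)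
  with \<omega> show "\<omega> \<in> cyl (ys @ t)" by (auto simp: cyl_def)
qed

lemma mem_cyl_Cons:
  "\<omega> \<in> cyl (z # t) \<longleftrightarrow> \<omega> \<in> W \<and> \<omega> 0 = z \<and> (\<forall>i<length t. \<omega> (Suc i) = t ! i)"
  by (auto simp: cyl_def less_Suc_eq_0_disj)

lemma cyl_killed_eq:
  assumes "set r \<subseteq> {None}"
  shows "cyl (ys @ None # r) = {\<omega> \<in> W. \<forall>j. \<omega> j = (if j < length ys then ys ! j else None)}"
proof (intro equalityI subsetI)
  fix \<omega> assume \<omega>: "\<omega> \<in> cyl (ys @ None # r)"
  then have "\<omega> \<in> W" "\<omega> (length ys) = None"
    by (auto simp: cyl_def nth_append)
  then have "\<omega> j = None" if "length ys \<le> j" for j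
    using W_None_upward that by blast
  with \<omega> show "\<omega> \<in> {\<omega> \<in> W. \<forall>j. \<omega> j = (if j < length ys then ys ! j else None)}"
    by (auto simp: cyl_def nth_append)
next
  fix \<omega> assume "\<omega> \<in> {\<omega> \<in> W. \<forall>j. \<omega> j = (if j < length ys then ys ! j else None)}"
  moreover have "(None # r) ! k = None" if "k < length (None # r)" for k
    using assms nth_mem[OF that] by auto
  ultimately show "\<omega> \<in> cyl (ys @ None # r)"
    by (auto simp: cyl_def nth_append)
qed

lemma cyl_revived_empty:
  assumes "Some y \<in> set r"
  shows "cyl (ys @ None # r) = {}"
proof -
  obtain i where i: "i < length r" "r ! i = Some y"
    using assms by (metis in_set_conv_nth)
  have "\<omega> \<notin> cyl (ys @ None # r)" for \<omega>
  proof
    assume "\<omega> \<in> cyl (ys @ None # r)"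
    then have "\<omega> \<in> W" "\<omega> (length ys) = None" "\<omega> (length ys + Suc i) = Some y"
      using i by (auto simp: cyl_def nth_append)
    then show False using W_None_upward[of \<omega> "length ys" "length ys + Suc i"] by simp
  qed
  then show ?thesis by blast
qed

lemma mem_path_cyl_iff:
  assumes b: "length b = Suc n"
  shows "\<omega> \<in> cyl (map Some (rev b)) \<longleftrightarrow>
           \<omega> \<in> W \<and> \<omega> n \<noteq> None \<and> rev (map (\<lambda>j. the (\<omega> j)) [0..<Suc n]) = b"
proof
  assume \<omega>: "\<omega> \<in> cyl (map Some (rev b))"
  then have Some: "\<omega> j = Some (rev b ! j)" if "j < Suc n" for j
    using that b by (auto simp: cyl_def)
  then have "map (\<lambda>j. the (\<omega> j)) [0..<Suc n] = rev b"
    using b by (intro nth_equalityI) (simp_all del: upt_Suc)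
  then show "\<omega> \<in> W \<and> \<omega> n \<noteq> None \<and> rev (map (\<lambda>j. the (\<omega> j)) [0..<Suc n]) = b"
    using \<omega> Some[of n] by (auto simp: cyl_def)
next
  assume \<omega>: "\<omega> \<in> W \<and> \<omega> n \<noteq> None \<and> rev (map (\<lambda>j. the (\<omega> j)) [0..<Suc n]) = b"
  have "\<omega> j = Some (rev b ! j)" if "j < Suc n" for j
  proof -
    have "\<omega> j \<noteq> None"
      using \<omega> that by (meson W_None_upward less_Suc_eq_le)
    moreover have "rev b = map (\<lambda>j. the (\<omega> j)) [0..<Suc n]"
      using \<omega> by auto
    then have "rev b ! j = the (\<omega> j)"
      using that by (simp del: upt_Suc)
    ultimately show ?thesis by simp
  qed
  then show "\<omega> \<in> cyl (map Some (rev b))"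
    using \<omega> b by (auto simp: cyl_def)
qed

lemma disjoint_family_on_path_cyl:
  assumes "B \<subseteq> {xs. length xs = Suc n}"
  shows "disjoint_family_on (\<lambda>b. cyl (map Some (rev b))) B"
  unfolding disjoint_family_on_def
proof (intro ballI impI)
  fix b b' assume "b \<in> B" "b' \<in> B" "b \<noteq> b'"
  with assms have "length b = Suc n" "length b' = Suc n"
    by auto
  with \<open>b \<noteq> b'\<close> show "cyl (map Some (rev b)) \<inter> cyl (map Some (rev b')) = {}"
    by (auto simp: mem_path_cyl_iff)
qed

lemma space_Wspace: "space Wspace = W"
  unfolding Wspace_def by (simp add: space_restrict_space space_PiM)

lemma cyl_in_sets_Wspace: "cyl ys \<in> sets Wspace"
proof -
  have "{\<omega> \<in> space (Pi\<^sub>M UNIV (\<lambda>_. count_space UNIV)). \<forall>j<length ys. \<omega> j = ys ! j}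
          \<in> sets (Pi\<^sub>M UNIV (\<lambda>_. count_space UNIV))"
    by measurable
  then show ?thesis
    unfolding Wspace_def sets_restrict_space cyl_def by (auto simp: space_PiM)
qed

lemma W_Int_coordinate_eq_UN_cyl:
  "W \<inter> {\<omega>. \<omega> i \<in> Y} = (\<Union>ys \<in> {ys. length ys = Suc i \<and> ys ! i \<in> Y}. cyl ys)"
proof (intro equalityI subsetI)
  fix \<omega> assume "\<omega> \<in> W \<inter> {\<omega>. \<omega> i \<in> Y}"
  then have "\<omega> \<in> cyl (map \<omega> [0..<Suc i])" "map \<omega> [0..<Suc i] \<in> {ys. length ys = Suc i \<and> ys ! i \<in> Y}"
    by (auto simp: cyl_def simp del: upt_Suc)
  then show "\<omega> \<in> (\<Union>ys \<in> {ys. length ys = Suc i \<and> ys ! i \<in> Y}. cyl ys)" by blast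
qed (auto simp: cyl_def)

lemma sets_Wspace_eq_sigma_cyl:
  "sets (Wspace :: (nat \<Rightarrow> 'a::countable option) measure) = sigma_sets W (range cyl)"
proof
  show "sigma_sets W (range cyl) \<subseteq> sets (Wspace :: (nat \<Rightarrow> 'a option) measure)"
    using sets.sigma_sets_subset[of "range cyl" Wspace] cyl_in_sets_Wspace
    by (auto simp: space_Wspace)
next
  define G :: "(nat \<Rightarrow> 'a option) set set" where "G = {{\<omega>. \<omega> i \<in> Y} | i Y. True}"
  have "sets (Pi\<^sub>M UNIV (\<lambda>_. count_space UNIV)) = sigma_sets UNIV G"
    unfolding G_def by (subst sets_PiM_single) (simp add: space_PiM)
  then have "sets (Wspace :: (nat \<Rightarrow> 'a option) measure) = {A \<inter> W | A. A \<in> sigma_sets UNIV G}"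
    unfolding Wspace_def sets_restrict_space by blast
  also have "\<dots> = sigma_sets W {A \<inter> W | A. A \<in> G}"
    using sigma_sets_vimage_commute[of "\<lambda>\<omega>. \<omega>" W UNIV G] by simp
  also have "\<dots> \<subseteq> sigma_sets W (range cyl)"
  proof (rule sigma_sets_mono, safe)
    fix A assume "A \<in> G"
    then obtain i Y where "A = {\<omega>. \<omega> i \<in> Y}" unfolding G_def by blast
    then have "A \<inter> W = (\<Union>ys \<in> {ys. length ys = Suc i \<and> ys ! i \<in> Y}. cyl ys)"
      using W_Int_coordinate_eq_UN_cyl by blast
    also have "\<dots> \<in> sigma_sets W (range cyl)"
      using range_cyl_subset_Pow_W by (intro sigma_algebra.countable_UN''[OF sigma_algebra_sigma_sets])
         (auto intro: countableI_type)
    finally show "A \<inter> W \<in> sigma_sets W (range cyl)" .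
  qed
  finally show "sets (Wspace :: (nat \<Rightarrow> 'a option) measure) \<subseteq> sigma_sets W (range cyl)" .
qed

lemma Int_stable_cyl: "Int_stable (range cyl)"
proof (rule Int_stableI, safe)
  fix ys zs :: "'a option list"
  show "cyl ys \<inter> cyl zs \<in> range cyl"
  proof (cases "cyl ys \<inter> cyl zs = {}")
    case True
    then show ?thesis using cyl_None by (metis rangeI)
  next
    case False
    then obtain \<omega> where "\<omega> \<in> cyl ys" "\<omega> \<in> cyl zs" by blast
    then have "cyl ys \<inter> cyl zs = cyl (if length ys \<le> length zs then zs else ys)"
      by (auto simp: cyl_def)
    then show ?thesis by blast
  qed
qed

lemma measure_eqI_cyl:
  fixes M N :: "(nat \<Rightarrow> 'a::countable option) measure"
  assumes "sets M = sets Wspace" "sets N = sets Wspace"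
    and "\<And>ys. emeasure M (cyl ys) = emeasure N (cyl ys)"
    and "\<And>y. emeasure M (cyl [y]) \<noteq> \<infinity>"
  shows "M = N"
proof (rule measure_eqI_generator_eq_countable[OF Int_stable_cyl range_cyl_subset_Pow_W])
  show "\<Union> (range (\<lambda>y. cyl [y])) = W"
    by (auto simp: cyl_def)
qed (use assms in \<open>auto simp: sets_Wspace_eq_sigma_cyl\<close>)

section \<open>The Kuznetsov measure of cylinders\<close>

lemma emeasure_cyl_path:
  assumes "kuznetsov q \<nu> K" "xs \<noteq> []"
  shows "emeasure K (cyl (map Some (rev xs))) = ennreal (\<nu> (hd xs)) * pathweight q xs"
  using assms unfolding kuznetsov_def cyl_def by simp

lemma emeasure_cyl_killed:
  assumes "kuznetsov q \<nu> K" "xs \<noteq> []"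
  shows "emeasure K (cyl (map Some (rev xs) @ None # r))
           = (if set r \<subseteq> {None} then potpart q \<nu> (hd xs) else 0) * pathweight q xs"
proof (cases "set r \<subseteq> {None}")
  case True
  let ?killed = "{\<omega> \<in> W. \<forall>j. \<omega> j = (if j < length xs then Some (rev xs ! j) else None)}"
  have "cyl (map Some (rev xs) @ None # r) = ?killed"
    by (auto simp: cyl_killed_eq[OF True])
  moreover have "emeasure K ?killed = potpart q \<nu> (hd xs) * pathweight q xs"
    using assms unfolding kuznetsov_def by blast
  ultimately show ?thesis using True by simp
next
  case False
  then obtain y where "Some y \<in> set r" by (metis not_None_eq singletonI subsetI)
  then show ?thesis using False by (simp add: cyl_revived_empty)
qed

lemma emeasure_cyl_append:
  assumes K: "kuznetsov q \<nu> K" and "xs \<noteq> []"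
  shows "emeasure K (cyl (map Some (rev xs) @ t))
           = emeasure K (cyl (Some (hd xs) # t)) * pathweight q xs"
  using \<open>xs \<noteq> []\<close>
proof (induction t arbitrary: xs)
  case Nil
  then show ?case
    using emeasure_cyl_path[OF K, of xs] emeasure_cyl_path[OF K, of "[hd xs]"]
    by (simp add: pathweight_singleton)
next
  case (Cons z t)
  show ?case
  proof (cases z)
    case None
    then show ?thesis
      using emeasure_cyl_killed[OF K Cons.prems, of t] emeasure_cyl_killed[OF K, of "[hd xs]" t]
      by (simp add: pathweight_singleton)
  next
    case (Some y)
    from Cons.prems obtain c r where xs: "xs = c # r" by (cases xs) auto
    have "emeasure K (cyl (map Some (rev xs) @ z # t)) = emeasure K (cyl (map Some (rev (y # xs)) @ t))"
      using Some by simp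
    also have "\<dots> = emeasure K (cyl (Some y # t)) * ennreal (q y c) * pathweight q xs"
      using Cons.IH[of "y # xs"] by (simp add: xs pathweight_Cons_Cons mult.assoc)
    also have "emeasure K (cyl (Some y # t)) * ennreal (q y c) = emeasure K (cyl (Some c # z # t))"
      using Cons.IH[of "[y, c]"] Some by (simp add: pathweight_Cons_Cons pathweight_singleton)
    finally show ?thesis by (simp add: xs)
  qed
qed

section \<open>Shifted paths\<close>

lemma shift_preimage_cyl_Int_cyl:
  assumes ys: "length ys = Suc n" "ys ! n \<noteq> None"
  shows "shift n -` cyl zs \<inter> cyl ys = (if zs = [] \<or> hd zs = ys ! n then cyl (ys @ tl zs) else {})"
proof -
  have shift_W: "shift n \<omega> \<in> W" if "\<omega> \<in> cyl ys" for \<omega>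
    using that ys by (intro shift_in_W) (auto simp: cyl_def)
  show ?thesis
  proof (cases zs)
    case Nil
    then show ?thesis using shift_W by (auto simp: cyl_def)
  next
    case (Cons z t)
    have "\<omega> \<in> shift n -` cyl zs \<inter> cyl ys \<longleftrightarrow> z = ys ! n \<and> \<omega> \<in> cyl (ys @ t)" for \<omega>
    proof (cases "\<omega> \<in> cyl ys")
      case True
      then have "\<omega> n = ys ! n"
        using ys by (simp add: cyl_def)
      then show ?thesis
        using True shift_W[OF True] unfolding Cons cyl_append
        by (auto simp: mem_cyl_Cons ys(1) add.commute)
    qed (simp add: cyl_append)
    then show ?thesis using Cons by auto
  qed
qed

lemma measurable_shift:
  assumes "n < length ys" "ys ! n \<noteq> None"
  shows "shift n \<in> restrict_space Wspace (cyl ys) \<rightarrow>\<^sub>M Wspace"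
proof -
  have "shift n \<in> space (restrict_space Wspace (cyl ys)) \<rightarrow> W"
    using assms by (auto simp: space_restrict_space space_Wspace cyl_def intro!: shift_in_W)
  moreover have "shift n \<in> Pi\<^sub>M UNIV (\<lambda>_. count_space UNIV)
                             \<rightarrow>\<^sub>M Pi\<^sub>M UNIV (\<lambda>_. count_space (UNIV :: 'a option set))"
    by (rule measurable_PiM_single') (auto simp: space_PiM)
  then have "shift n \<in> restrict_space Wspace (cyl ys) \<rightarrow>\<^sub>M Pi\<^sub>M UNIV (\<lambda>_. count_space UNIV)"
    unfolding Wspace_def by (intro measurable_restrict_space1)
  ultimately show ?thesis
    unfolding Wspace_def by (rule measurable_restrict_space2)
qed

lemma shift_preimage_Int_cyl_in_sets:
  assumes "A \<in> sets Wspace" "n < length ys" "ys ! n \<noteq> None"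
  shows "shift n -` A \<inter> cyl ys \<in> sets Wspace"
proof -
  have E: "cyl ys \<inter> space Wspace = cyl ys"
    by (auto simp: space_Wspace cyl_def)
  have "shift n -` A \<inter> cyl ys \<in> sets (restrict_space Wspace (cyl ys))"
    using measurable_sets[OF measurable_shift[OF assms(2,3)] assms(1)]
    by (simp add: space_restrict_space E)
  then show ?thesis
    using sets_restrict_space_iff[of "cyl ys" Wspace] E cyl_in_sets_Wspace by auto
qed

lemma emeasure_distr_shift_restrict_cyl:
  assumes sK: "sets K = sets Wspace" and ys: "n < length ys" "ys ! n \<noteq> None"
    and A: "A \<in> sets Wspace"
  shows "emeasure (distr (restrict_space K (cyl ys)) Wspace (shift n)) A
           = emeasure K (shift n -` A \<inter> cyl ys)"
proof -
  have E: "cyl ys \<inter> space K = cyl ys"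
    using sets_eq_imp_space_eq[OF sK] by (auto simp: space_Wspace cyl_def)
  have "shift n \<in> restrict_space K (cyl ys) \<rightarrow>\<^sub>M Wspace"
    using measurable_shift[OF ys]
    by (subst measurable_cong_sets[OF restrict_space_sets_cong[OF refl sK] refl])
  then have "emeasure (distr (restrict_space K (cyl ys)) Wspace (shift n)) A
               = emeasure (restrict_space K (cyl ys)) (shift n -` A \<inter> cyl ys)"
    using A by (simp add: emeasure_distr space_restrict_space E)
  also have "\<dots> = emeasure K (shift n -` A \<inter> cyl ys)"
    using E sK cyl_in_sets_Wspace by (intro emeasure_restrict_space) auto
  finally show ?thesis .
qed

lemma emeasure_shift_preimage_cyl_Int_path_cyl:
  assumes K: "kuznetsov q \<nu> K" and b: "length b = Suc n"
  shows "emeasure K (shift n -` cyl zs \<inter> cyl (map Some (rev b)))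
           = emeasure K (cyl zs \<inter> cyl [Some (hd b)]) * pathweight q b"
proof -
  have "b \<noteq> []"
    using b by auto
  then have "map Some (rev b) ! n = Some (hd b)"
    using b by (simp add: rev_nth hd_conv_nth)
  then have preimage: "shift n -` cyl zs \<inter> cyl (map Some (rev b))
      = (if zs = [] \<or> hd zs = Some (hd b) then cyl (map Some (rev b) @ tl zs) else {})"
    using b by (subst shift_preimage_cyl_Int_cyl) simp_all
  show ?thesis
  proof (cases "zs = [] \<or> hd zs = Some (hd b)")
    case True
    then have "emeasure K (shift n -` cyl zs \<inter> cyl (map Some (rev b)))
                 = emeasure K (cyl (map Some (rev b) @ tl zs))"
      by (simp add: preimage)
    also have "\<dots> = emeasure K (cyl (Some (hd b) # tl zs)) * pathweight q b"
      using emeasure_cyl_append[OF K \<open>b \<noteq> []\<close>] .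
    also have "\<dots> = emeasure K (cyl zs \<inter> cyl [Some (hd b)]) * pathweight q b"
      using True by (simp add: cyl_Int_cyl_singleton)
    finally show ?thesis .
  next
    case False
    then show ?thesis
      by (simp add: preimage cyl_Int_cyl_singleton)
  qed
qed

lemma emeasure_shift_preimage_Int_path_cyl:
  fixes K :: "(nat \<Rightarrow> 'a::countable option) measure"
  assumes K: "kuznetsov q \<nu> K" and A: "A \<in> sets Wspace" and b: "length b = Suc n"
  shows "emeasure K (shift n -` A \<inter> cyl (map Some (rev b)))
           = emeasure K (A \<inter> cyl [Some (hd b)]) * pathweight q b"
proof -
  have "b \<noteq> []"
    using b by auto
  define ys where "ys = map Some (rev b)"
  have ys: "n < length ys" "ys ! n \<noteq> None"
    using b by (simp_all add: ys_def rev_nth)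
  have sK: "sets K = sets Wspace"
    using K by (simp add: kuznetsov_def)
  define M1 where "M1 = distr (restrict_space K (cyl ys)) Wspace (shift n)"
  define M2 where "M2 = density K (\<lambda>\<omega>. pathweight q b * indicator (cyl [Some (hd b)]) \<omega>)"
  have M1: "emeasure M1 A' = emeasure K (shift n -` A' \<inter> cyl ys)" if "A' \<in> sets Wspace" for A'
    unfolding M1_def using emeasure_distr_shift_restrict_cyl[OF sK ys that] .
  have M2: "emeasure M2 A' = emeasure K (A' \<inter> cyl [Some (hd b)]) * pathweight q b"
    if "A' \<in> sets Wspace" for A'
  proof -
    have X[measurable]: "cyl [Some (hd b)] \<in> sets K"
      using sK cyl_in_sets_Wspace by simp
    have "emeasure M2 A' = (\<integral>\<^sup>+ \<omega>. pathweight q b * indicator (A' \<inter> cyl [Some (hd b)]) \<omega> \<partial>K)"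
      unfolding M2_def using that sK
      by (subst emeasure_density) (auto intro!: nn_integral_cong simp: indicator_def)
    also have "\<dots> = pathweight q b * emeasure K (A' \<inter> cyl [Some (hd b)])"
      using that sK cyl_in_sets_Wspace by (subst nn_integral_cmult_indicator) auto
    finally show ?thesis by (simp add: mult.commute)
  qed
  have "M1 = M2"
  proof (rule measure_eqI_cyl)
    show "sets M1 = sets Wspace" "sets M2 = sets Wspace"
      by (simp_all add: M1_def M2_def sK)
    show "emeasure M1 (cyl zs) = emeasure M2 (cyl zs)" for zs
      using emeasure_shift_preimage_cyl_Int_path_cyl[OF K b]
      by (simp add: M1 M2 cyl_in_sets_Wspace ys_def)
    show "emeasure M1 (cyl [y]) \<noteq> \<infinity>" for y
    proof -
      have "emeasure M1 (cyl [y]) \<le> emeasure K (cyl ys)"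
        unfolding M1[OF cyl_in_sets_Wspace] using sK cyl_in_sets_Wspace by (intro emeasure_mono) auto
      also have "\<dots> < \<infinity>"
        using emeasure_cyl_path[OF K \<open>b \<noteq> []\<close>] pathweight_finite[of q b]
        by (simp add: ys_def ennreal_mult_less_top less_top)
      finally show ?thesis by simp
    qed
  qed
  then show ?thesis
    using M1[OF A] M2[OF A] by (simp add: ys_def)
qed

lemma path_event_eq_UN_cyl:
  assumes "B \<subseteq> {xs. length xs = Suc n}"
  shows "{\<omega> \<in> W. shift n \<omega> \<in> A \<and> \<omega> n = Some x \<and> rev (map (\<lambda>j. the (\<omega> j)) [0..<Suc n]) \<in> B}
           = (\<Union>b\<in>B. shift n -` (A \<inter> cyl [Some x]) \<inter> cyl (map Some (rev b)))"
    (is "?event = ?union")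
proof -
  have shift_cyl: "shift n \<omega> \<in> cyl [Some x] \<longleftrightarrow> \<omega> n = Some x" if "\<omega> \<in> W" for \<omega>
    using shift_in_W[OF that] by (auto simp: cyl_def)
  show ?thesis
  proof (intro equalityI subsetI)
    fix \<omega> assume \<omega>: "\<omega> \<in> ?event"
    define b where "b = rev (map (\<lambda>j. the (\<omega> j)) [0..<Suc n])"
    have "\<omega> \<in> cyl (map Some (rev b))"
      using \<omega> mem_path_cyl_iff[of b n \<omega>] by (simp add: b_def del: upt_Suc)
    moreover have "b \<in> B" "shift n \<omega> \<in> A \<inter> cyl [Some x]"
      using \<omega> shift_cyl by (auto simp: b_def)
    ultimately show "\<omega> \<in> ?union"
      by blast
  next
    fix \<omega> assume "\<omega> \<in> ?union"
    then obtain b where "b \<in> B" "shift n \<omega> \<in> A \<inter> cyl [Some x]" "\<omega> \<in> cyl (map Some (rev b))"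
      by blast
    then show "\<omega> \<in> ?event"
      using assms shift_cyl mem_path_cyl_iff[of b n \<omega>] by auto
  qed
qed

lemma Qn_eq_nn_integral:
  assumes "B \<subseteq> {xs. length xs = Suc n}"
  shows "Qn q x n B = (\<integral>\<^sup>+ b. (if hd b = x then pathweight q b else 0) \<partial>count_space B)"
proof -
  have "{xs \<in> B. length xs = Suc n} = B"
    using assms by auto
  then show ?thesis
    by (simp add: Qn_def)
qed

theorem mainTheorem8:
  fixes q :: "'a::countable \<Rightarrow> 'a \<Rightarrow> real"
    and \<nu> :: "'a \<Rightarrow> real"
    and K :: "(nat \<Rightarrow> 'a option) measure"
    and A :: "(nat \<Rightarrow> 'a option) set"
    and n :: nat and B :: "'a list set" and x :: 'a
  assumes "\<forall>y z. 0 \<le> q y z"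
    and "green_finite q"
    and "excessive q \<nu>"
    and "kuznetsov q \<nu> K"
    and "A \<in> sets Wspace"
    and "1 \<le> n"
    and "B \<subseteq> {xs. length xs = Suc n}"
  shows "emeasure K {\<omega> \<in> W. (\<lambda>m. \<omega> (m + n)) \<in> A \<and> \<omega> n = Some x \<and>
            rev (map (\<lambda>j. the (\<omega> j)) [0..<Suc n]) \<in> B}
         = emeasure K (A \<inter> {\<omega> \<in> W. \<omega> 0 = Some x}) * Qn q x n B"
proof -
  note K = assms(4) and B = assms(7)
  have A: "A \<inter> cyl [Some x] \<in> sets Wspace"
    using assms(5) cyl_in_sets_Wspace by blast
  define X where "X b = shift n -` (A \<inter> cyl [Some x]) \<inter> cyl (map Some (rev b))" for b
  have X_sets: "X b \<in> sets K" if "b \<in> B" for b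
    using K B that shift_preimage_Int_cyl_in_sets[OF A] by (auto simp: X_def kuznetsov_def)
  have X_disjoint: "disjoint_family_on X B"
    by (rule disjoint_family_on_bisimulation[OF disjoint_family_on_path_cyl[OF B]]) (auto simp: X_def)
  have "emeasure K (\<Union>b\<in>B. X b) = (\<integral>\<^sup>+ b. emeasure K (X b) \<partial>count_space B)"
    by (rule emeasure_UN_countable[OF X_sets countableI_type X_disjoint])
  also have "\<dots> = (\<integral>\<^sup>+ b. emeasure K (A \<inter> cyl [Some x]) * (if hd b = x then pathweight q b else 0)
                        \<partial>count_space B)"
    using emeasure_shift_preimage_Int_path_cyl[OF K A] B
    by (intro nn_integral_cong) (auto simp: X_def Int_assoc cyl_Int_cyl_singleton)
  also have "\<dots> = emeasure K (A \<inter> cyl [Some x]) * Qn q x n B"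
    by (simp add: nn_integral_cmult Qn_eq_nn_integral[OF B])
  also have "A \<inter> cyl [Some x] = A \<inter> {\<omega> \<in> W. \<omega> 0 = Some x}"
    by (auto simp: cyl_def)
  finally show ?thesis
    using path_event_eq_UN_cyl[OF B] by (simp add: X_def)
qed

end
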